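(* (Stable Local Attractor.) Let $z^*\in\bigcap_{t=1}^M F(\mathcal{T}_t)$ and let $r=\min\{r_t: t\in\{1,\dots,M\}\}$, where $r_t=\min\{d_{sep}(z^*,C_t),\ d_{esc}(z^*,C_t)\}$ (alternatively, $r_t$ may be taken as: $\min\{d_{sep}(z^*,C_t),\ \tfrac{d_{sep}(z^*,C_t)+d_{esc}(z^*,C_t)}{2}\}$ if $|K_t(z^* )|=1$, and $\min\{g(x_i^*,x_j^*,w_i,w_j),\,g(y_i^*,y_j^*,h_i,h_j)\}$ if $|K_t(z^* )|=2$, where $C_t=C_{i,j}$, $z^*=(x^*,y^* )$ and $g(a,b,c,d)=|(a-b)+(c-d)/2|/\sqrt{2}$), and assume $r>0$. Let $\epsilon\in(0,r)$ be arbitrary and let $(z^n)_{n\ge0}$ be a sequential MAP trajectory. If $z^{n_0}\in B(z^*,\epsilon)$ for some $n_0$, then $z^n\in B(z^*,\epsilon)$ for all $n\ge n_0$, and $(z^n)$ converges to some common fixed point $\tilde z^*\in\bigcap_{t=1}^M F(\mathcal{T}_t)$.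
   Context: Fix reals $W,H>0$, integers $N\ge N_m\ge 2$, and widths $w_i>0$, heights $h_i>0$ for $1\le i\le N_m$. Points of $\mathbb{R}^{2N}$ are written $z=(x,y)$ with $x=(x_1,\dots,x_N)$, $y=(y_1,\dots,y_N)$. For $1\le i\le N_m$ let $B_i^x=\{z: 0\le x_i\le W-w_i\}$, $B_i^y=\{z: 0\le y_i\le H-h_i\}$; for $i\neq j$ let $B_{i,j}=B_i^x\cap B_i^y\cap B_j^x\cap B_j^y$, $O^x_{i,j}=\{z: x_i+w_i\le x_j\}$, $O^y_{i,j}=\{z: y_i+h_i\le y_j\}$. Define the closed convex sets $C_{i,j,\mathsf{L}}=O^x_{i,j}\cap B_{i,j}$, $C_{i,j,\mathsf{R}}=O^x_{j,i}\cap B_{i,j}$, $C_{i,j,\mathsf{B}}=O^y_{i,j}\cap B_{i,j}$, $C_{i,j,\mathsf{A}}=O^y_{j,i}\cap B_{i,j}$ (assumed nonempty) and $C_{i,j}=C_{i,j,\mathsf{L}}\cup C_{i,j,\mathsf{R}}\cup C_{i,j,\mathsf{B}}\cup C_{i,j,\mathsf{A}}$. Enumerate the pairs $1\le i<j\le N_m$ by $t=1,\dots,M$ and write $C_t=C_{i,j}$, $C_{t,k}=C_{i,j,k}$ for $k\in\{\mathsf{L},\mathsf{R},\mathsf{B},\mathsf{A}\}$. With $\|\cdot\|$ the Euclidean norm and $\mathrm{d}(z,C)=\inf_{c\in C}\|z-c\|$: $\mathcal{P}_t(z)=\{c\in C_t:\|z-c\|=\mathrm{d}(z,C_t)\}$,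 $P_{t,k}(z)$ is the unique nearest point of $C_{t,k}$ to $z$; for a fixed relaxation parameter $\lambda\in(0,2)$, $\mathcal{T}_t(z)=\{z+\lambda(p-z):p\in\mathcal{P}_t(z)\}$ and $F(\mathcal{T}_t)=\{z: z\in\mathcal{T}_t(z)\}$. Active indices: $K_t(z)=\{k: P_{t,k}(z)\in\mathcal{P}_t(z)\}$. $d_{esc}(z^*,C_t)=\inf\{\|z-z^*\| : z\notin C_{t,k}\text{ for some }k\in K_t(z^* )\}$; $d_{sep}(z^*,C_t)=\min\{\mathrm{d}(z^*,C_{t,k}) : k\notin K_t(z^* )\}$. $B(z,r)$ is the open Euclidean ball. A sequential MAP trajectory is a sequence with $z^{n+1}\in\mathcal{T}_{t_n}(z^n)$ for all $n\ge0$, where $t_n\in\{1,\dots,M\}$ and each sweep $\{t_{kM+1},\dots,t_{(k+1)M}\}$ equals $\{1,\dots,M\}$. *)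

theory Defs
  imports "HOL-Analysis.Analysis"
begin

text \<open>Points z = (x,y) of R^(2N): x, y are real vectors indexed by the finite type 'n
  (N = CARD('n)).  The product norm is the Euclidean norm of R^(2N).\<close>

type_synonym 'n pt = "(real^'n) \<times> (real^'n)"

datatype side = Lft | Rgt | Blw | Abv

lemma UNIV_side: "(UNIV :: side set) = {Lft, Rgt, Blw, Abv}"
  using side.exhaust by auto

instance side :: finite
  by standard (simp add: UNIV_side)

definition Bx :: "real \<Rightarrow> ('n::finite \<Rightarrow> real) \<Rightarrow> 'n \<Rightarrow> 'n pt set" where
  "Bx W w i = {z. 0 \<le> fst z $ i \<and> fst z $ i \<le> W - w i}"

definition By :: "real \<Rightarrow> ('n::finite \<Rightarrow> real) \<Rightarrow> 'n \<Rightarrow> 'n pt set" where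
  "By H h i = {z. 0 \<le> snd z $ i \<and> snd z $ i \<le> H - h i}"

definition Bij :: "real \<Rightarrow> real \<Rightarrow> ('n::finite \<Rightarrow> real) \<Rightarrow> ('n \<Rightarrow> real) \<Rightarrow> 'n \<Rightarrow> 'n \<Rightarrow> 'n pt set" where
  "Bij W H w h i j = Bx W w i \<inter> By H h i \<inter> Bx W w j \<inter> By H h j"

definition Ox :: "('n::finite \<Rightarrow> real) \<Rightarrow> 'n \<Rightarrow> 'n \<Rightarrow> 'n pt set" where
  "Ox w i j = {z. fst z $ i + w i \<le> fst z $ j}"

definition Oy :: "('n::finite \<Rightarrow> real) \<Rightarrow> 'n \<Rightarrow> 'n \<Rightarrow> 'n pt set" where
  "Oy h i j = {z. snd z $ i + h i \<le> snd z $ j}"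

definition Cpiece :: "real \<Rightarrow> real \<Rightarrow> ('n::finite \<Rightarrow> real) \<Rightarrow> ('n \<Rightarrow> real) \<Rightarrow> 'n \<Rightarrow> 'n \<Rightarrow> side \<Rightarrow> 'n pt set" where
  "Cpiece W H w h i j k =
     (case k of Lft \<Rightarrow> Ox w i j | Rgt \<Rightarrow> Ox w j i | Blw \<Rightarrow> Oy h i j | Abv \<Rightarrow> Oy h j i)
     \<inter> Bij W H w h i j"

text \<open>Pairs i<j of rectangle indices (rectangles indexed by the set Rs, |Rs| = N_m).\<close>
definition pairs :: "'n::linorder set \<Rightarrow> ('n \<times> 'n) set" where
  "pairs Rs = {(i, j). i \<in> Rs \<and> j \<in> Rs \<and> i < j}"

definition Cfam :: "real \<Rightarrow> real \<Rightarrow> ('n::{finite,linorder} \<Rightarrow> real) \<Rightarrow> ('n \<Rightarrow> real) \<Rightarrow> ('n \<times> 'n) \<Rightarrow> side \<Rightarrow> 'n pt set" where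
  "Cfam W H w h t = Cpiece W H w h (fst t) (snd t)"

definition unionC :: "(side \<Rightarrow> 'a set) \<Rightarrow> 'a set" where
  "unionC C = (\<Union>k. C k)"

definition nearest :: "(side \<Rightarrow> 'a::metric_space set) \<Rightarrow> 'a \<Rightarrow> 'a set" where
  "nearest C z = {c \<in> unionC C. dist z c = infdist z (unionC C)}"

definition Top :: "real \<Rightarrow> (side \<Rightarrow> 'a::real_normed_vector set) \<Rightarrow> 'a \<Rightarrow> 'a set" where
  "Top lam C z = {z + lam *\<^sub>R (p - z) | p. p \<in> nearest C z}"

definition FixT :: "real \<Rightarrow> (side \<Rightarrow> 'a::real_normed_vector set) \<Rightarrow> 'a set" where
  "FixT lam C = {z. z \<in> Top lam C z}"

definition active :: "(side \<Rightarrow> 'a::{real_inner,heine_borel} set) \<Rightarrow> 'a \<Rightarrow> side set" where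
  "active C z = {k. closest_point (C k) z \<in> nearest C z}"

definition d_esc :: "(side \<Rightarrow> 'a::{real_inner,heine_borel} set) \<Rightarrow> 'a \<Rightarrow> real" where
  "d_esc C zs = Inf {norm (z - zs) | z. \<exists>k \<in> active C zs. z \<notin> C k}"

definition d_sep :: "(side \<Rightarrow> 'a::{real_inner,heine_borel} set) \<Rightarrow> 'a \<Rightarrow> real" where
  "d_sep C zs = Min ((\<lambda>k. infdist zs (C k)) ` {k. k \<notin> active C zs})"

definition gfun :: "real \<Rightarrow> real \<Rightarrow> real \<Rightarrow> real \<Rightarrow> real" where
  "gfun a b c d = \<bar>(a - b) + (c - d) / 2\<bar> / sqrt 2"

end

theory Submission
  imports Defs
begin

(* Within distance r of z*, every nearest point used by T_t lies in a piece C_{t,k} that also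
   contains z*: either z* is deep inside its active pieces (d_esc) and far from the inactive
   ones (d_sep), or, when two pieces are active, leaving a piece for its opposite one costs more
   than the slack measured by g.  A relaxed projection onto a closed convex set containing z* is
   Fejer monotone with respect to z*, so the trajectory stays in the ball and its step lengths
   are square summable.  A cluster point z~ of the bounded trajectory has a neighbourhood that
   meets only pieces containing z~, so once the steps are short the same Fejer argument around z~
   gives convergence of the whole sequence.  Every index recurs in every sweep and the steps
   vanish, hence z~ lies in every C_t, i.e. it is a common fixed point. *)

section \<open>The pieces are closed polyhedra\<close>

lemma Ox_halfspace: "Ox w i j = {z. w i \<le> (axis j 1 - axis i 1, 0) \<bullet> z}"
  by (auto simp: Ox_def inner_axis' algebra_simps)

lemma Oy_halfspace: "Oy h i j = {z. h i \<le> (0, axis j 1 - axis i 1) \<bullet> z}"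
  by (auto simp: Oy_def inner_axis' algebra_simps)

lemma Bx_halfspaces: "Bx W w i = {z. 0 \<le> (axis i 1, 0) \<bullet> z} \<inter> {z. (axis i 1, 0) \<bullet> z \<le> W - w i}"
  by (auto simp: Bx_def inner_axis')

lemma By_halfspaces: "By H h i = {z. 0 \<le> (0, axis i 1) \<bullet> z} \<inter> {z. (0, axis i 1) \<bullet> z \<le> H - h i}"
  by (auto simp: By_def inner_axis')

lemma convex_Bij: "convex (Bij W H w h i j)"
  unfolding Bij_def Bx_halfspaces By_halfspaces
  by (simp add: convex_Int convex_halfspace_le convex_halfspace_ge)

lemma closed_Bij: "closed (Bij W H w h i j)"
  unfolding Bij_def Bx_halfspaces By_halfspaces
  by (simp add: closed_Int closed_halfspace_le closed_halfspace_ge)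

lemma convex_Cfam: "convex (Cfam W H w h t k)"
  unfolding Cfam_def Cpiece_def Ox_halfspace Oy_halfspace
  by (cases k) (simp_all add: convex_Int convex_Bij convex_halfspace_ge)

lemma closed_Cfam: "closed (Cfam W H w h t k)"
  unfolding Cfam_def Cpiece_def Ox_halfspace Oy_halfspace
  by (cases k) (simp_all add: closed_Int closed_Bij closed_halfspace_ge)

section \<open>Nearest points of a family of pieces\<close>

lemma nearest_dist_le:
  assumes "p \<in> nearest C z" "q \<in> unionC C"
  shows "dist z p \<le> dist z q"
  using assms infdist_le[of q "unionC C" z] by (simp add: nearest_def)

lemma FixT_eq_unionC:
  assumes "lam \<noteq> 0"
  shows "FixT lam C = unionC C"
proof (intro set_eqI iffI)
  fix z assume "z \<in> FixT lam C"
  then obtain p where p: "p \<in> nearest C z" "z = z + lam *\<^sub>R (p - z)"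
    by (auto simp: FixT_def Top_def)
  then have "p = z" using assms by simp
  then show "z \<in> unionC C" using p(1) by (simp add: nearest_def)
next
  fix z assume "z \<in> unionC C"
  then have "z \<in> nearest C z" by (simp add: nearest_def)
  then show "z \<in> FixT lam C" by (force simp: FixT_def Top_def)
qed

lemma active_eq_containing_pieces:
  assumes "zs \<in> unionC C" and "\<And>k. closed (C k)" and "\<And>k. C k \<noteq> {}"
  shows "active C zs = {k. zs \<in> C k}"
proof -
  have "closest_point (C k) zs \<in> nearest C zs \<longleftrightarrow> zs \<in> C k" for k
  proof -
    have "closest_point (C k) zs \<in> C k" using closest_point_in_set[OF assms(2,3)] .
    then have "closest_point (C k) zs \<in> nearest C zs \<longleftrightarrow> closest_point (C k) zs = zs"
      using assms(1) by (auto simp: nearest_def unionC_def)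
    also have "\<dots> \<longleftrightarrow> zs \<in> C k"
      using \<open>closest_point (C k) zs \<in> C k\<close> closest_point_self[of zs "C k"] by metis
    finally show ?thesis .
  qed
  then show ?thesis by (auto simp: active_def)
qed

lemma ball_d_esc_subset:
  assumes "k \<in> active C zs"
  shows "ball zs (d_esc C zs) \<subseteq> C k"
proof
  fix y assume y: "y \<in> ball zs (d_esc C zs)"
  show "y \<in> C k"
  proof (rule ccontr)
    assume "y \<notin> C k"
    then have "d_esc C zs \<le> norm (y - zs)"
      unfolding d_esc_def using assms by (intro cInf_lower bdd_belowI[of _ 0]) auto
    then show False using y by (simp add: dist_norm norm_minus_commute)
  qed
qed

lemma d_sep_le_infdist:
  assumes "k \<notin> active C zs"
  shows "d_sep C zs \<le> infdist zs (C k)"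
  unfolding d_sep_def using assms by (intro Min_le) auto

lemma ball_superset_near_point:
  fixes z zs :: "'a::real_normed_vector"
  assumes "ball zs \<rho> \<subseteq> K" and "zs \<in> K"
    and "dist z zs < s" and "2 * dist z zs < s + \<rho>"
  shows "\<exists>q\<in>K. dist z q < s - dist z zs"
proof (cases "2 * dist z zs < s")
  case True
  then show ?thesis using \<open>zs \<in> K\<close> by (intro bexI[of _ zs]) auto
next
  case False
  define r where "r = dist z zs"
  define u where "u = min r ((2 * r - s + \<rho>) / 2)"
  define q where "q = zs + (u / r) *\<^sub>R (z - zs)"
  \<comment> \<open>u < \<rho> keeps q in the ball; u > 2 r - s gives dist z q = r - u < s - r\<close>
  have r_pos: "0 < r" using False assms(3) unfolding r_def by linarith
  have u: "0 \<le> u" "u \<le> r" "u < \<rho>" "2 * r - s < u"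
    using False assms(3,4) r_pos unfolding u_def r_def by (auto simp: min_def)
  have "dist q zs = u" using r_pos u by (simp add: q_def dist_norm r_def)
  then have "q \<in> K" using assms(1) u by (auto simp: dist_commute)
  moreover have "dist z q = r - u"
  proof -
    have "dist z q = norm ((1 - u / r) *\<^sub>R (z - zs))"
      by (simp add: q_def dist_norm algebra_simps)
    also have "\<dots> = (1 - u / r) * r"
      using r_pos u by (simp add: r_def dist_norm)
    also have "\<dots> = r - u"
      using r_pos by (simp add: field_simps)
    finally show ?thesis .
  qed
  ultimately show ?thesis using u by (intro bexI[of _ q]) (auto simp: r_def)
qed

lemma nearest_in_active_piece_sep_esc:
  fixes C :: "side \<Rightarrow> 'a::{real_inner,heine_borel} set"
  assumes closed: "\<And>k. closed (C k)" and ne: "\<And>k. C k \<noteq> {}" and zs: "zs \<in> unionC C"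
    and sep: "dist z zs < d_sep C zs" and sep_esc: "2 * dist z zs < d_sep C zs + d_esc C zs"
    and p: "p \<in> nearest C z"
  shows "\<exists>k. zs \<in> C k \<and> p \<in> C k"
proof (rule ccontr)
  assume no_shared: "\<nexists>k. zs \<in> C k \<and> p \<in> C k"
  have act: "active C zs = {k. zs \<in> C k}" using active_eq_containing_pieces[OF zs closed ne] .
  obtain m where pm: "p \<in> C m" using p by (auto simp: nearest_def unionC_def)
  then have "m \<notin> active C zs" using no_shared act by auto
  then have "d_sep C zs \<le> dist zs p"
    using d_sep_le_infdist[of m C zs] infdist_le[OF pm, of zs] by linarith
  then have p_far: "d_sep C zs - dist z zs \<le> dist z p"
    using dist_triangle[of zs p z] by (simp add: dist_commute)
  obtain k where zk: "zs \<in> C k" using zs by (auto simp: unionC_def)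
  then have "ball zs (d_esc C zs) \<subseteq> C k" using ball_d_esc_subset[of k C zs] act by simp
  then obtain q where "q \<in> C k" "dist z q < d_sep C zs - dist z zs"
    using ball_superset_near_point[OF _ zk sep sep_esc] by blast
  then show False
    using nearest_dist_le[OF p, of q] p_far by (auto simp: unionC_def)
qed

section \<open>Half-space geometry\<close>

lemma norm_diff_scaleR_less:
  fixes e v :: "'a::real_inner"
  assumes \<theta>: "0 \<le> \<theta>" "\<theta> < 1" and short: "2 * norm e < (1 + \<theta>) * norm v"
  shows "norm (e - \<theta> *\<^sub>R v) < norm (e - v)"
proof -
  have "2 * (e \<bullet> v) < (1 + \<theta>) * (norm v)\<^sup>2"
  proof -
    have "2 * (e \<bullet> v) \<le> 2 * norm e * norm v" using norm_cauchy_schwarz[of e v] by simp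
    also have "\<dots> < (1 + \<theta>) * norm v * norm v"
      using short by (intro mult_strict_right_mono) (auto intro: le_less_trans[OF _ short])
    finally show ?thesis by (simp add: power2_eq_square)
  qed
  then have "(1 - \<theta>) * (2 * (e \<bullet> v)) < (1 - \<theta>) * ((1 + \<theta>) * (norm v)\<^sup>2)"
    using \<theta> by (intro mult_strict_left_mono) auto
  then have "(norm (e - \<theta> *\<^sub>R v))\<^sup>2 < (norm (e - v))\<^sup>2"
    unfolding power2_norm_eq_inner
    by (simp add: inner_diff_left inner_diff_right inner_commute power2_eq_square algebra_simps)
  then show ?thesis by (rule power_less_imp_less_base) simp
qed

lemma closer_point_in_halfspace:
  fixes \<phi> :: "'a::real_inner \<Rightarrow> real"
  assumes lin: "linear \<phi>" and bnd: "\<And>u. \<bar>\<phi> u\<bar> \<le> L * norm u" and cvx: "convex B"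
    and zs: "zs \<in> B" "\<alpha> \<le> \<phi> zs" and q: "q \<in> B" "\<phi> q \<le> \<beta>" and "\<beta> < \<alpha>"
    and close: "L * dist z zs < \<phi> zs - (\<alpha> + \<beta>) / 2"
  shows "\<exists>q'\<in>B. \<alpha> \<le> \<phi> q' \<and> dist z q' < dist z q"
proof -
  define v where "v = q - zs"
  define D where "D = \<phi> zs - \<phi> q"
  define \<theta> where "\<theta> = (\<phi> zs - \<alpha>) / D"
  have D_pos: "0 < D" using zs q \<open>\<beta> < \<alpha>\<close> by (simp add: D_def)
  have \<theta>: "0 \<le> \<theta>" "\<theta> < 1" using zs q \<open>\<beta> < \<alpha>\<close> D_pos by (simp_all add: \<theta>_def D_def)
  \<comment> \<open>q' is where the segment from zs to q crosses the hyperplane \<open>\<phi> = \<alpha>\<close>\<close>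
  define q' where "q' = zs + \<theta> *\<^sub>R v"
  have "q' = (1 - \<theta>) *\<^sub>R zs + \<theta> *\<^sub>R q" by (simp add: q'_def v_def algebra_simps)
  then have "q' \<in> B" using convexD[OF cvx zs(1) q(1)] \<theta> by simp
  moreover have "\<phi> q' = \<alpha>"
    using D_pos
    by (simp add: q'_def v_def \<theta>_def D_def linear_add[OF lin] linear_scale[OF lin] linear_diff[OF lin])
      (simp add: field_simps)
  moreover have "dist z q' < dist z q"
  proof -
    have D_le: "D \<le> L * norm v"
      using bnd[of v] by (simp add: v_def D_def linear_diff[OF lin])
    have "D * (1 + \<theta>) / 2 = (2 * \<phi> zs - \<alpha> - \<phi> q) / 2"
      using D_pos by (simp add: \<theta>_def D_def field_simps)
    then have "\<phi> zs - (\<alpha> + \<beta>) / 2 \<le> D * (1 + \<theta>) / 2"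
      using q(2) by (simp add: field_simps)
    also have "\<dots> \<le> L * norm v * (1 + \<theta>) / 2"
      using D_le \<theta> by (intro divide_right_mono mult_right_mono) auto
    finally have "L * (2 * norm (z - zs)) < L * ((1 + \<theta>) * norm v)"
      using close by (simp add: dist_norm field_simps)
    moreover have "0 < L"
    proof -
      have "0 < L * norm v" using D_pos D_le by linarith
      then show ?thesis by (simp add: zero_less_mult_iff)
    qed
    ultimately have "2 * norm (z - zs) < (1 + \<theta>) * norm v" by simp
    from norm_diff_scaleR_less[OF \<theta> this] show ?thesis
      by (simp add: dist_norm q'_def v_def algebra_simps)
  qed
  ultimately show ?thesis by auto
qed

lemma abs_coord_diff_le:
  fixes x :: "real^'n"
  assumes "a \<noteq> b"
  shows "\<bar>x $ b - x $ a\<bar> \<le> sqrt 2 * norm x"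
proof (rule power2_le_imp_le)
  have "(x $ a)\<^sup>2 + (x $ b)\<^sup>2 = (\<Sum>k\<in>{a, b}. (x $ k)\<^sup>2)" using assms by simp
  also have "\<dots> \<le> (\<Sum>k\<in>UNIV. (x $ k)\<^sup>2)" by (rule sum_mono2) auto
  also have "\<dots> = (norm x)\<^sup>2" by (simp add: norm_vec_def L2_set_def sum_nonneg)
  finally have "(x $ a)\<^sup>2 + (x $ b)\<^sup>2 \<le> (norm x)\<^sup>2" .
  moreover have "(x $ b - x $ a)\<^sup>2 \<le> 2 * ((x $ a)\<^sup>2 + (x $ b)\<^sup>2)"
    using zero_le_power2[of "x $ a + x $ b"] by (simp add: power2_eq_square algebra_simps)
  ultimately show "\<bar>x $ b - x $ a\<bar>\<^sup>2 \<le> (sqrt 2 * norm x)\<^sup>2"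
    by (simp add: power_mult_distrib)
qed simp

lemma closer_point_coordinate_gap:
  fixes P :: "'a::real_inner \<Rightarrow> real^'n"
  assumes "linear P" and P_le: "\<And>u. norm (P u) \<le> norm u" and "a \<noteq> b" and "0 < c a + c b"
    and "convex B" and zs: "zs \<in> B" "P zs $ a + c a \<le> P zs $ b"
    and q: "q \<in> B" "P q $ b + c b \<le> P q $ a"
    and close: "dist z zs < gfun (P zs $ a) (P zs $ b) (c a) (c b)"
  shows "\<exists>q'\<in>{x. P x $ a + c a \<le> P x $ b} \<inter> B. dist z q' < dist z q"
proof -
  define \<phi> where "\<phi> u = P u $ b - P u $ a" for u
  have "linear \<phi>"
    using \<open>linear P\<close> unfolding \<phi>_def
    by (intro linearI) (simp_all add: linear_add linear_scale algebra_simps)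
  moreover have "\<bar>\<phi> u\<bar> \<le> sqrt 2 * norm u" for u
    using abs_coord_diff_le[OF \<open>a \<noteq> b\<close>, of "P u"] P_le[of u] unfolding \<phi>_def
    by (meson order_trans mult_left_mono real_sqrt_ge_zero zero_le_numeral)
  moreover have "sqrt 2 * gfun (P zs $ a) (P zs $ b) (c a) (c b) = \<phi> zs - (c a + - c b) / 2"
    using zs(2) \<open>0 < c a + c b\<close> by (simp add: gfun_def \<phi>_def abs_if field_simps)
  then have "sqrt 2 * dist z zs < \<phi> zs - (c a + - c b) / 2"
    using mult_strict_left_mono[OF close, of "sqrt 2"] by simp
  ultimately obtain q' where "q' \<in> B" "c a \<le> \<phi> q'" "dist z q' < dist z q"
    using closer_point_in_halfspace[OF _ _ \<open>convex B\<close> zs(1) _ q(1) _ _, of \<phi> "sqrt 2" "c a" "- c b"]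
      zs(2) q(2) \<open>0 < c a + c b\<close> unfolding \<phi>_def by force
  then show ?thesis unfolding \<phi>_def by (intro bexI[of _ q']) auto
qed

section \<open>Two active pieces\<close>

fun opposite :: "side \<Rightarrow> side" where
  "opposite Lft = Rgt" | "opposite Rgt = Lft" | "opposite Blw = Abv" | "opposite Abv = Blw"

lemma opposite_opposite [simp]: "opposite (opposite k) = k"
  by (cases k) simp_all

lemma opposite_mem_if_card_2:
  assumes "card S = 2" and "\<And>k. \<not> (k \<in> S \<and> opposite k \<in> S)" and "m \<notin> S"
  shows "opposite m \<in> S"
proof -
  obtain x y where "S = {x, y}" "x \<noteq> y" using assms(1) card_2_iff by metis
  then show ?thesis using assms(2)[of x] assms(3) by (cases x; cases y; cases m) auto
qed

lemma gfun_swap: "gfun b a d c = gfun a b c d"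
  unfolding gfun_def by (simp add: abs_minus_commute[of _ "(a - b) + (c - d) / 2"] field_simps)

lemma Cpiece_opposite_disjoint:
  assumes "0 < w i + w j" and "0 < h i + h j"
  shows "Cpiece W H w h i j k \<inter> Cpiece W H w h i j (opposite k) = {}"
  using assms by (cases k) (auto simp: Cpiece_def Ox_def Oy_def)

lemma Cpiece_closer_point_opposite:
  assumes "i \<noteq> j" "0 < w i" "0 < w j" "0 < h i" "0 < h j"
    and zs: "zs \<in> Cpiece W H w h i j k" and q: "q \<in> Cpiece W H w h i j (opposite k)"
    and close_x: "dist z zs < gfun (fst zs $ i) (fst zs $ j) (w i) (w j)"
    and close_y: "dist z zs < gfun (snd zs $ i) (snd zs $ j) (h i) (h j)"
  shows "\<exists>q'\<in>Cpiece W H w h i j k. dist z q' < dist z q"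
proof -
  have norm_fst: "norm (fst u) \<le> norm u" and norm_snd: "norm (snd u) \<le> norm u" for u :: "'a pt"
    using norm_fst_le[of "fst u" "snd u"] norm_snd_le[of "snd u" "fst u"] by simp_all
  note fst_gap = closer_point_coordinate_gap[OF linear_fst norm_fst _ _ convex_Bij[of W H w h i j],
      where zs = zs and q = q and z = z]
  note snd_gap = closer_point_coordinate_gap[OF linear_snd norm_snd _ _ convex_Bij[of W H w h i j],
      where zs = zs and q = q and z = z]
  have "0 < w i + w j" "0 < w j + w i" "0 < h i + h j" "0 < h j + h i"
    using assms(2-5) by auto
  moreover have "dist z zs < gfun (fst zs $ j) (fst zs $ i) (w j) (w i)"
    and "dist z zs < gfun (snd zs $ j) (snd zs $ i) (h j) (h i)"
    using close_x close_y by (simp_all add: gfun_swap)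
  ultimately show ?thesis
    using zs q close_x close_y \<open>i \<noteq> j\<close>
      fst_gap[of i j w] fst_gap[of j i w] snd_gap[of i j h] snd_gap[of j i h]
    by (cases k) (auto simp: Cpiece_def Ox_def Oy_def)
qed

lemma Cpiece_nearest_in_active_piece_card_2:
  fixes zs z p :: "'n::{finite,linorder} pt"
  assumes "i \<noteq> j" "0 < w i" "0 < w j" "0 < h i" "0 < h j"
    and ne: "\<And>k. Cpiece W H w h i j k \<noteq> {}" and zs: "zs \<in> unionC (Cpiece W H w h i j)"
    and card: "card (active (Cpiece W H w h i j) zs) = 2"
    and close_x: "dist z zs < gfun (fst zs $ i) (fst zs $ j) (w i) (w j)"
    and close_y: "dist z zs < gfun (snd zs $ i) (snd zs $ j) (h i) (h j)"
    and p: "p \<in> nearest (Cpiece W H w h i j) z"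
  shows "\<exists>k. zs \<in> Cpiece W H w h i j k \<and> p \<in> Cpiece W H w h i j k"
proof (rule ccontr)
  let ?C = "Cpiece W H w h i j"
  assume no_shared: "\<nexists>k. zs \<in> ?C k \<and> p \<in> ?C k"
  obtain m where pm: "p \<in> ?C m" using p by (auto simp: nearest_def unionC_def)
  have closed: "closed (?C k)" for k using closed_Cfam[of W H w h "(i, j)" k] by (simp add: Cfam_def)
  have act: "active ?C zs = {k. zs \<in> ?C k}" using active_eq_containing_pieces[OF zs closed ne] .
  have "\<not> (zs \<in> ?C k \<and> zs \<in> ?C (opposite k))" for k
    using Cpiece_opposite_disjoint[of w i j h W H k] assms(2-5) by auto
  then have "zs \<in> ?C (opposite m)"
    using opposite_mem_if_card_2[of "active ?C zs" m] card no_shared pm unfolding act by auto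
  moreover have "p \<in> ?C (opposite (opposite m))" using pm by simp
  ultimately obtain q where "q \<in> ?C (opposite m)" "dist z q < dist z p"
    using Cpiece_closer_point_opposite[OF assms(1-5) _ _ close_x close_y] by blast
  then show False using nearest_dist_le[OF p, of q] by (auto simp: unionC_def)
qed

definition admissible_radius ::
    "real \<Rightarrow> real \<Rightarrow> ('n::{finite,linorder} \<Rightarrow> real) \<Rightarrow> ('n \<Rightarrow> real) \<Rightarrow> 'n pt \<Rightarrow> 'n \<times> 'n \<Rightarrow> real \<Rightarrow> bool"
  where "admissible_radius W H w h zs t \<rho> \<longleftrightarrow>
      \<rho> = min (d_sep (Cfam W H w h t) zs) (d_esc (Cfam W H w h t) zs)
    \<or> (card (active (Cfam W H w h t) zs) = 1 \<and>
       \<rho> = min (d_sep (Cfam W H w h t) zs)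
               ((d_sep (Cfam W H w h t) zs + d_esc (Cfam W H w h t) zs) / 2))
    \<or> (card (active (Cfam W H w h t) zs) = 2 \<and>
       \<rho> = min (gfun (fst zs $ fst t) (fst zs $ snd t) (w (fst t)) (w (snd t)))
               (gfun (snd zs $ fst t) (snd zs $ snd t) (h (fst t)) (h (snd t))))"

lemma Cfam_nearest_in_active_piece:
  fixes zs z p :: "'n::{finite,linorder} pt"
  assumes t: "t \<in> pairs Rs" and wpos: "\<forall>i\<in>Rs. 0 < w i" and hpos: "\<forall>i\<in>Rs. 0 < h i"
    and ne: "\<And>k. Cfam W H w h t k \<noteq> {}" and zs: "zs \<in> unionC (Cfam W H w h t)"
    and \<rho>: "admissible_radius W H w h zs t \<rho>" and close: "dist z zs < \<rho>"
    and p: "p \<in> nearest (Cfam W H w h t) z"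
  shows "\<exists>k. zs \<in> Cfam W H w h t k \<and> p \<in> Cfam W H w h t k"
proof -
  let ?C = "Cfam W H w h t"
  obtain i j where t_eq: "t = (i, j)" and "i \<in> Rs" "j \<in> Rs" "i < j"
    using t by (auto simp: pairs_def)
  then have C_eq: "?C = Cpiece W H w h i j" by (simp add: Cfam_def fun_eq_iff)
  consider "dist z zs < d_sep ?C zs" "2 * dist z zs < d_sep ?C zs + d_esc ?C zs"
    | "card (active ?C zs) = 2"
      "dist z zs < gfun (fst zs $ i) (fst zs $ j) (w i) (w j)"
      "dist z zs < gfun (snd zs $ i) (snd zs $ j) (h i) (h j)"
    using \<rho> close unfolding admissible_radius_def t_eq by (auto simp: field_simps)
  then show ?thesis
  proof cases
    case 1
    then show ?thesis using nearest_in_active_piece_sep_esc[OF closed_Cfam ne zs _ _ p] by blast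
  next
    case 2
    then show ?thesis
      using Cpiece_nearest_in_active_piece_card_2[of i j w h W H zs z p] ne zs p
        \<open>i \<in> Rs\<close> \<open>j \<in> Rs\<close> \<open>i < j\<close> wpos hpos unfolding C_eq by auto
  qed
qed

section \<open>Relaxed projection trajectories\<close>

lemma relaxed_projection_fejer:
  fixes z p c :: "'a::real_inner"
  assumes obtuse: "(z - p) \<bullet> (c - p) \<le> 0" and "0 \<le> lam"
  shows "(norm (z + lam *\<^sub>R (p - z) - c))\<^sup>2 \<le> (norm (z - c))\<^sup>2 - lam * (2 - lam) * (norm (p - z))\<^sup>2"
proof -
  have "(norm (z + lam *\<^sub>R (p - z) - c))\<^sup>2
      = (norm (z - c))\<^sup>2 - lam * (2 - lam) * (norm (p - z))\<^sup>2 + 2 * lam * ((z - p) \<bullet> (c - p))"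
    unfolding power2_norm_eq_inner
    by (simp add: inner_diff_left inner_diff_right inner_add_left inner_add_right inner_commute
        power2_eq_square algebra_simps)
  also have "\<dots> \<le> (norm (z - c))\<^sup>2 - lam * (2 - lam) * (norm (p - z))\<^sup>2"
    using mult_left_mono[OF obtuse, of "2 * lam"] \<open>0 \<le> lam\<close> by simp
  finally show ?thesis .
qed

lemma gap_tendsto_0:
  fixes e d :: "nat \<Rightarrow> real"
  assumes gap: "\<And>n. e (Suc n) + d n \<le> e n" and "\<And>n. 0 \<le> d n" and "\<And>n. 0 \<le> e n"
  shows "d \<longlonglongrightarrow> 0"
proof -
  have "e (Suc n) \<le> e n" for n using gap[of n] assms(2)[of n] by linarith
  then have "decseq e" by (rule decseq_SucI)
  then obtain L where "e \<longlonglongrightarrow> L" using decseq_convergent[of e 0] assms(3) by blast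
  then have "(\<lambda>n. e n - e (Suc n)) \<longlonglongrightarrow> 0"
    using tendsto_diff[OF _ LIMSEQ_Suc] by fastforce
  then show ?thesis
    using gap assms(2)
    by (intro tendsto_sandwich[of "\<lambda>_. 0" d _ "\<lambda>n. e n - e (Suc n)"]) (auto simp: algebra_simps)
qed

lemma finite_family_isolating_radius:
  fixes A :: "'i \<Rightarrow> 'a::metric_space set"
  assumes "finite I" and "\<And>i. i \<in> I \<Longrightarrow> closed (A i)" and "\<And>i. i \<in> I \<Longrightarrow> A i \<noteq> {}"
  shows "\<exists>\<delta>>0. \<forall>i\<in>I. x \<notin> A i \<longrightarrow> \<delta> \<le> infdist x (A i)"
proof -
  define \<delta> where "\<delta> = Min (insert 1 ((\<lambda>i. infdist x (A i)) ` {i\<in>I. x \<notin> A i}))"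
  have "0 < infdist x (A i)" if "i \<in> I" "x \<notin> A i" for i
    using in_closed_iff_infdist_zero[OF assms(2,3)[OF that(1)], of x] infdist_nonneg[of x "A i"] that
    by linarith
  then have "0 < \<delta>" using assms(1) by (simp add: \<delta>_def)
  moreover have "\<delta> \<le> infdist x (A i)" if "i \<in> I" "x \<notin> A i" for i
    using assms(1) that unfolding \<delta>_def by (intro Min_le) auto
  ultimately show ?thesis by blast
qed

lemma sweeps_visit_infinitely_often:
  assumes "finite T" and sweeps: "\<And>k. ts ` {k * card T + 1 .. (k + 1) * card T} = T" and "t \<in> T"
  shows "\<exists>n\<ge>N. ts n = t"
proof -
  obtain n where n: "N * card T + 1 \<le> n" "ts n = t"
    using sweeps[of N] \<open>t \<in> T\<close> by (metis atLeastAtMost_iff imageE)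
  have "N \<le> N * card T" using \<open>finite T\<close> \<open>t \<in> T\<close> card_gt_0_iff[of T] by auto
  then have "N \<le> n" using n(1) by linarith
  then show ?thesis using n(2) by blast
qed

lemma bounded_range_if_tail_in_ball:
  fixes f :: "nat \<Rightarrow> 'a::metric_space"
  assumes "\<And>n. n0 \<le> n \<Longrightarrow> f n \<in> ball c r"
  shows "bounded (range f)"
proof -
  have "f n \<in> f ` {..<n0} \<union> ball c r" for n
  proof (cases "n < n0")
    case False
    then show ?thesis using assms[of n] by simp
  qed simp
  then have "range f \<subseteq> f ` {..<n0} \<union> ball c r" by blast
  then show ?thesis by (rule bounded_subset[rotated]) (simp add: finite_imp_bounded)
qed

locale map_trajectory =
  fixes lam :: real and C :: "'t \<Rightarrow> side \<Rightarrow> 'a::{real_inner,heine_borel} set"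
    and T :: "'t set" and ts :: "nat \<Rightarrow> 't" and zs :: "nat \<Rightarrow> 'a"
  assumes lam: "0 < lam" "lam < 2"
    and closed: "\<And>t k. closed (C t k)" and convex: "\<And>t k. convex (C t k)"
    and nonempty: "\<And>t k. t \<in> T \<Longrightarrow> C t k \<noteq> {}"
    and finite: "finite T" and ts_in: "\<And>n. ts n \<in> T"
    and traj: "\<And>n. zs (Suc n) \<in> Top lam (C (ts n)) (zs n)"
begin

definition shares_piece :: "'a \<Rightarrow> nat \<Rightarrow> bool" where
  "shares_piece c n \<longleftrightarrow> (\<forall>p\<in>nearest (C (ts n)) (zs n). \<exists>k. c \<in> C (ts n) k \<and> p \<in> C (ts n) k)"

lemma traj_step:
  obtains p where "p \<in> nearest (C (ts n)) (zs n)" "zs (Suc n) = zs n + lam *\<^sub>R (p - zs n)"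
  using traj[of n] by (auto simp: Top_def)

lemma dist_step: "dist (zs (Suc n)) (zs n) = lam * infdist (zs n) (unionC (C (ts n)))"
proof -
  obtain p where p: "p \<in> nearest (C (ts n)) (zs n)" "zs (Suc n) = zs n + lam *\<^sub>R (p - zs n)"
    by (rule traj_step)
  then have "dist (zs (Suc n)) (zs n) = lam * dist (zs n) p"
    using lam by (simp add: dist_norm norm_minus_commute)
  then show ?thesis using p(1) by (simp add: nearest_def)
qed

lemma fejer_step:
  assumes "shares_piece c n"
  shows "(dist (zs (Suc n)) c)\<^sup>2 + (2 - lam) / lam * (dist (zs (Suc n)) (zs n))\<^sup>2 \<le> (dist (zs n) c)\<^sup>2"
proof -
  obtain p where p: "p \<in> nearest (C (ts n)) (zs n)" "zs (Suc n) = zs n + lam *\<^sub>R (p - zs n)"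
    by (rule traj_step)
  then obtain k where k: "c \<in> C (ts n) k" "p \<in> C (ts n) k"
    using assms by (auto simp: shares_piece_def)
  have "\<forall>y\<in>C (ts n) k. dist (zs n) p \<le> dist (zs n) y"
    using nearest_dist_le[OF p(1)] by (auto simp: unionC_def)
  then have "(zs n - p) \<bullet> (c - p) \<le> 0"
    using any_closest_point_dot[OF convex closed k(2,1)] by blast
  from relaxed_projection_fejer[OF this, of lam] lam
  have "(dist (zs (Suc n)) c)\<^sup>2 \<le> (dist (zs n) c)\<^sup>2 - lam * (2 - lam) * (dist (zs n) p)\<^sup>2"
    by (simp add: p(2) dist_norm norm_minus_commute)
  moreover have "dist (zs (Suc n)) (zs n) = lam * dist (zs n) p"
    using lam by (simp add: p(2) dist_norm norm_minus_commute)
  then have "(2 - lam) / lam * (dist (zs (Suc n)) (zs n))\<^sup>2 = lam * (2 - lam) * (dist (zs n) p)\<^sup>2"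
    using lam by (simp add: power2_eq_square field_simps)
  ultimately show ?thesis by linarith
qed

lemma fejer_monotone:
  assumes shares: "\<And>n. n0 \<le> n \<Longrightarrow> dist (zs n) c < \<epsilon> \<Longrightarrow> shares_piece c n"
    and start: "dist (zs n0) c < \<epsilon>" and "n0 \<le> n"
  shows "dist (zs n) c \<le> dist (zs n0) c"
  using \<open>n0 \<le> n\<close>
proof (induction n rule: dec_induct)
  case (step n)
  have "dist (zs n) c < \<epsilon>" using step.IH start by linarith
  then have "shares_piece c n" using shares step.hyps by blast
  moreover have "0 \<le> (2 - lam) / lam * (dist (zs (Suc n)) (zs n))\<^sup>2" using lam by simp
  ultimately have "(dist (zs (Suc n)) c)\<^sup>2 \<le> (dist (zs n) c)\<^sup>2" using fejer_step[of c n] by linarith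
  then show ?case using step.IH by (meson order_trans power2_le_imp_le zero_le_dist)
qed simp

lemma steps_tendsto_0:
  assumes shares: "\<And>n. n0 \<le> n \<Longrightarrow> dist (zs n) c < \<epsilon> \<Longrightarrow> shares_piece c n"
    and start: "dist (zs n0) c < \<epsilon>"
  shows "(\<lambda>n. dist (zs (Suc n)) (zs n)) \<longlonglongrightarrow> 0"
proof -
  define \<kappa> where "\<kappa> = (2 - lam) / lam"
  have "\<kappa> > 0" using lam by (simp add: \<kappa>_def)
  have "shares_piece c (n + n0)" for n
  proof -
    have "dist (zs (n + n0)) c < \<epsilon>" using fejer_monotone[OF shares start, of "n + n0"] start by simp
    then show ?thesis using shares[of "n + n0"] by simp
  qed
  then have "(dist (zs (Suc (n + n0))) c)\<^sup>2 + \<kappa> * (dist (zs (Suc (n + n0))) (zs (n + n0)))\<^sup>2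
      \<le> (dist (zs (n + n0)) c)\<^sup>2" for n
    using fejer_step[of c "n + n0"] unfolding \<kappa>_def by simp
  then have "(\<lambda>n. \<kappa> * (dist (zs (Suc (n + n0))) (zs (n + n0)))\<^sup>2) \<longlonglongrightarrow> 0"
    using \<open>\<kappa> > 0\<close> by (intro gap_tendsto_0[where e = "\<lambda>n. (dist (zs (n + n0)) c)\<^sup>2"]) auto
  then have "(\<lambda>n. (dist (zs (Suc (n + n0))) (zs (n + n0)))\<^sup>2) \<longlonglongrightarrow> 0"
    using tendsto_mult_left[of _ 0 sequentially "1 / \<kappa>"] \<open>\<kappa> > 0\<close> by simp
  then have "(\<lambda>n. sqrt ((dist (zs (Suc (n + n0))) (zs (n + n0)))\<^sup>2)) \<longlonglongrightarrow> sqrt 0"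
    by (rule tendsto_real_sqrt)
  then show ?thesis
    using LIMSEQ_offset[where f = "\<lambda>n. dist (zs (Suc n)) (zs n)" and k = n0] by simp
qed

lemma tendsto_cluster_point:
  assumes steps: "(\<lambda>n. dist (zs (Suc n)) (zs n)) \<longlonglongrightarrow> 0"
    and r: "strict_mono r" and sub: "(zs \<circ> r) \<longlonglongrightarrow> zb"
  shows "zs \<longlonglongrightarrow> zb"
proof -
  obtain \<delta> where "\<delta> > 0" and isolating: "\<And>t k. t \<in> T \<Longrightarrow> zb \<notin> C t k \<Longrightarrow> \<delta> \<le> infdist zb (C t k)"
    using finite_family_isolating_radius[of "T \<times> UNIV" "\<lambda>(t, k). C t k" zb] finite closed nonempty
    by auto
  have "0 < lam * \<delta> / 2" using \<open>\<delta> > 0\<close> lam by simp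
  from order_tendstoD(2)[OF steps this]
  obtain N where N: "\<And>n. N \<le> n \<Longrightarrow> dist (zs (Suc n)) (zs n) < lam * \<delta> / 2"
    unfolding eventually_sequentially by blast
  have shares: "shares_piece zb n" if "N \<le> n" "dist (zs n) zb < \<delta> / 2" for n
    unfolding shares_piece_def
  proof
    fix p assume p: "p \<in> nearest (C (ts n)) (zs n)"
    then obtain k where pk: "p \<in> C (ts n) k" by (auto simp: nearest_def unionC_def)
    have "lam * dist (zs n) p < lam * (\<delta> / 2)"
      using N[OF that(1)] p by (simp add: dist_step nearest_def)
    then have "dist zb p < \<delta>"
      using that(2) lam dist_triangle[of zb p "zs n"] by (simp add: dist_commute)
    then have "zb \<in> C (ts n) k"
      using isolating[OF ts_in] infdist_le[OF pk, of zb] by force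
    then show "\<exists>k. zb \<in> C (ts n) k \<and> p \<in> C (ts n) k" using pk by blast
  qed
  show ?thesis
  proof (rule LIMSEQ_I)
    fix \<eta> :: real assume "0 < \<eta>"
    define \<epsilon> where "\<epsilon> = min \<eta> (\<delta> / 2)"
    have "0 < \<epsilon>" using \<open>0 < \<eta>\<close> \<open>0 < \<delta>\<close> by (simp add: \<epsilon>_def)
    from tendstoD[OF sub this]
    obtain J where J: "\<And>j. J \<le> j \<Longrightarrow> dist (zs (r j)) zb < \<epsilon>"
      unfolding eventually_sequentially by auto
    define m where "m = r (max J N)"
    have "N \<le> m" using seq_suble[OF r, of "max J N"] by (simp add: m_def)
    have start: "dist (zs m) zb < \<epsilon>" using J by (simp add: m_def)
    have "shares_piece zb n" if "m \<le> n" "dist (zs n) zb < \<epsilon>" for n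
      using that \<open>N \<le> m\<close> by (intro shares) (auto simp: \<epsilon>_def)
    then have "dist (zs n) zb < \<eta>" if "m \<le> n" for n
      using fejer_monotone[OF _ start that] start unfolding \<epsilon>_def by fastforce
    then show "\<exists>no. \<forall>n\<ge>no. norm (zs n - zb) < \<eta>" by (auto simp: dist_norm)
  qed
qed

lemma limit_mem_unionC:
  assumes lim: "zs \<longlonglongrightarrow> z'" and steps: "(\<lambda>n. dist (zs (Suc n)) (zs n)) \<longlonglongrightarrow> 0"
    and "t \<in> T" and often: "\<And>N. \<exists>n\<ge>N. ts n = t"
  shows "z' \<in> unionC (C t)"
proof -
  let ?U = "unionC (C t)"
  have "infdist z' ?U \<le> \<eta>" if "0 < \<eta>" for \<eta>
  proof -
    have "0 < \<eta> / 2" "0 < lam * \<eta> / 2" using \<open>0 < \<eta>\<close> lam by simp_all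
    from tendstoD[OF lim \<open>0 < \<eta> / 2\<close>]
    obtain N1 where N1: "\<And>n. N1 \<le> n \<Longrightarrow> dist (zs n) z' < \<eta> / 2"
      unfolding eventually_sequentially by blast
    from order_tendstoD(2)[OF steps \<open>0 < lam * \<eta> / 2\<close>]
    obtain N2 where N2: "\<And>n. N2 \<le> n \<Longrightarrow> dist (zs (Suc n)) (zs n) < lam * \<eta> / 2"
      unfolding eventually_sequentially by blast
    obtain n where n: "max N1 N2 \<le> n" "ts n = t" using often by blast
    have "lam * infdist (zs n) ?U < lam * (\<eta> / 2)"
      using N2[of n] n dist_step[of n] by simp
    then have "infdist (zs n) ?U < \<eta> / 2" using lam by simp
    moreover have "dist z' (zs n) < \<eta> / 2"
      using N1[of n] n by (simp add: dist_commute)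
    moreover have "infdist z' ?U \<le> infdist (zs n) ?U + dist z' (zs n)" by (rule infdist_triangle)
    ultimately show ?thesis by linarith
  qed
  then have "infdist z' ?U \<le> 0" by (rule field_le_epsilon) simp
  then have "infdist z' ?U = 0" using infdist_nonneg[of z' ?U] by linarith
  moreover have "closed ?U" using closed by (simp add: unionC_def closed_Union)
  moreover have "?U \<noteq> {}" using nonempty[OF \<open>t \<in> T\<close>] by (auto simp: unionC_def)
  ultimately show ?thesis using in_closed_iff_infdist_zero by blast
qed

lemma converges_to_common_fixpoint:
  assumes "bounded (range zs)" and steps: "(\<lambda>n. dist (zs (Suc n)) (zs n)) \<longlonglongrightarrow> 0"
    and often: "\<And>t N. t \<in> T \<Longrightarrow> \<exists>n\<ge>N. ts n = t"
  shows "\<exists>z'. (\<forall>t\<in>T. z' \<in> FixT lam (C t)) \<and> zs \<longlonglongrightarrow> z'"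
proof -
  obtain zb r where "strict_mono r" "(zs \<circ> r) \<longlonglongrightarrow> zb"
    using bounded_imp_convergent_subsequence[OF assms(1)] by blast
  then have "zs \<longlonglongrightarrow> zb" using tendsto_cluster_point[OF steps] by blast
  moreover have "zb \<in> FixT lam (C t)" if "t \<in> T" for t
    using limit_mem_unionC[OF \<open>zs \<longlonglongrightarrow> zb\<close> steps that often[OF that]] lam
    by (simp add: FixT_eq_unionC)
  ultimately show ?thesis by blast
qed

end

theorem mainTheorem3:
  fixes W H lam \<epsilon> :: real
    and w h :: "'n::{finite,linorder} \<Rightarrow> real"
    and Rs :: "'n set"
    and zstar :: "'n pt"
    and rt :: "'n \<times> 'n \<Rightarrow> real"
    and zs :: "nat \<Rightarrow> 'n pt"
    and ts :: "nat \<Rightarrow> 'n \<times> 'n"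
    and n0 :: nat
  assumes W: "W > 0" and H: "H > 0"
    and Rs: "card Rs \<ge> 2"
    and wpos: "\<forall>i\<in>Rs. w i > 0" and hpos: "\<forall>i\<in>Rs. h i > 0"
    and nonempty: "\<forall>t\<in>pairs Rs. \<forall>k. Cfam W H w h t k \<noteq> {}"
    and lam: "0 < lam" "lam < 2"
    and fixpt: "\<forall>t\<in>pairs Rs. zstar \<in> FixT lam (Cfam W H w h t)"
    and rt: "\<forall>t\<in>pairs Rs.
        rt t = min (d_sep (Cfam W H w h t) zstar) (d_esc (Cfam W H w h t) zstar)
      \<or> (card (active (Cfam W H w h t) zstar) = 1 \<and>
         rt t = min (d_sep (Cfam W H w h t) zstar)
                    ((d_sep (Cfam W H w h t) zstar + d_esc (Cfam W H w h t) zstar) / 2))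
      \<or> (card (active (Cfam W H w h t) zstar) = 2 \<and>
         rt t = min (gfun (fst zstar $ fst t) (fst zstar $ snd t) (w (fst t)) (w (snd t)))
                    (gfun (snd zstar $ fst t) (snd zstar $ snd t) (h (fst t)) (h (snd t))))"
    and rpos: "Min (rt ` pairs Rs) > 0"
    and eps: "0 < \<epsilon>" "\<epsilon> < Min (rt ` pairs Rs)"
    and ts_range: "\<forall>n. ts n \<in> pairs Rs"
    and sweeps: "\<forall>k. ts ` {k * card (pairs Rs) + 1 .. (k + 1) * card (pairs Rs)} = pairs Rs"
    and traj: "\<forall>n. zs (Suc n) \<in> Top lam (Cfam W H w h (ts n)) (zs n)"
    and start: "zs n0 \<in> ball zstar \<epsilon>"
  shows "(\<forall>n\<ge>n0. zs n \<in> ball zstar \<epsilon>) \<and>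
         (\<exists>z'. (\<forall>t\<in>pairs Rs. z' \<in> FixT lam (Cfam W H w h t)) \<and> zs \<longlonglongrightarrow> z')"
proof -
  interpret map_trajectory lam "Cfam W H w h" "pairs Rs" ts zs
    using lam nonempty ts_range traj by unfold_locales (simp_all add: closed_Cfam convex_Cfam)
  have shares: "shares_piece zstar n" if "dist (zs n) zstar < \<epsilon>" for n
  proof -
    have "Min (rt ` pairs Rs) \<le> rt (ts n)" using finite ts_range by (intro Min_le) auto
    then have "\<epsilon> < rt (ts n)" using eps(2) by linarith
    then have "dist (zs n) zstar < rt (ts n)" using that by linarith
    moreover have "admissible_radius W H w h zstar (ts n) (rt (ts n))"
      using rt ts_range unfolding admissible_radius_def by blast
    moreover have "zstar \<in> unionC (Cfam W H w h (ts n))"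
      using fixpt ts_range lam by (simp add: FixT_eq_unionC)
    ultimately show ?thesis
      using Cfam_nearest_in_active_piece[OF ts_range[rule_format] wpos hpos
          nonempty[rule_format, OF ts_range[rule_format]]]
      unfolding shares_piece_def by blast
  qed
  have start': "dist (zs n0) zstar < \<epsilon>" using start by (simp add: dist_commute)
  have stay: "zs n \<in> ball zstar \<epsilon>" if "n0 \<le> n" for n
    using fejer_monotone[OF shares start' that] start' by (simp add: dist_commute)
  from converges_to_common_fixpoint[OF bounded_range_if_tail_in_ball[OF stay]
      steps_tendsto_0[OF shares start']] sweeps_visit_infinitely_often[OF finite] sweeps stay
  show ?thesis by auto
qed

end
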